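(* Let $J^{ES}_{k,n}$ be the number of evolutionary stable configurations of length $n$ with exactly $k$ occupied lots (the empty configuration of length $0$ being counted once). Then, as formal power series, $$\sum_{n\ge 0}\sum_{k\ge 0} J^{ES}_{k,n}x^ky^n = \frac{1+xy+x^2y^2-x^2y^3+x^3y^4-x^3y^5}{1-x^2y^3-x^3y^5}.$$
   Context: A configuration of length $n\ge 0$ is a binary string $c_1c_2\cdots c_n$; $c_k=1$ means lot $k$ is occupied by a house, $c_k=0$ that it is empty. A house at position $k$ is blocked if $2\le k\le n-1$ and $c_{k-1}=c_{k+1}=1$ (lots beyond the ends never obstruct sunlight). A configuration is permissible if no house is blocked; maximal if it is permissible and, for every $k$ with $c_k=0$, setting $c_k=1$ yields a non-permissible string. A maximal configuration is resistant to predators if, for every $k$ with $c_k=0$, setting $c_k=1$ makes the new house at $k$ blocked; resistant to altruists if, for every $k$ with $c_k=0$, setting $c_k=1$ makes some house at a position $l\ne k$ blocked. Evolutionary stable configurations are maximal configurations resistant to both. *)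

theory Defs
  imports "HOL-Computational_Algebra.Formal_Power_Series"
begin

text \<open>A configuration of length n is a bool list of length n; lot k of the paper
  (1-based) is index k-1 here (0-based). True = occupied.\<close>

definition blocked :: "bool list \<Rightarrow> nat \<Rightarrow> bool" where
  "blocked c k \<longleftrightarrow> k < length c \<and> c ! k \<and> 1 \<le> k \<and> k + 1 < length c
      \<and> c ! (k - 1) \<and> c ! (k + 1)"

definition permissible :: "bool list \<Rightarrow> bool" where
  "permissible c \<longleftrightarrow> (\<forall>k < length c. \<not> blocked c k)"

definition maximal :: "bool list \<Rightarrow> bool" where
  "maximal c \<longleftrightarrow> permissible c \<and>
     (\<forall>k < length c. \<not> c ! k \<longrightarrow> \<not> permissible (c[k := True]))"

definition resistant_predators :: "bool list \<Rightarrow> bool" where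
  "resistant_predators c \<longleftrightarrow>
     (\<forall>k < length c. \<not> c ! k \<longrightarrow> blocked (c[k := True]) k)"

definition resistant_altruists :: "bool list \<Rightarrow> bool" where
  "resistant_altruists c \<longleftrightarrow>
     (\<forall>k < length c. \<not> c ! k \<longrightarrow> (\<exists>l < length c. l \<noteq> k \<and> blocked (c[k := True]) l))"

definition evolutionary_stable :: "bool list \<Rightarrow> bool" where
  "evolutionary_stable c \<longleftrightarrow> maximal c \<and> resistant_predators c \<and> resistant_altruists c"

definition J_ES :: "nat \<Rightarrow> nat \<Rightarrow> nat" where
  "J_ES k n = card {c :: bool list. length c = n \<and> length (filter id c) = k \<and> evolutionary_stable c}"

text \<open>Bivariate formal power series: outer variable y, inner variable x,
  i.e. the series is sum over n of (sum over k of J k n x^k) y^n.\<close>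

definition fps_x :: "int fps fps" where "fps_x = fps_const fps_X"
definition fps_y :: "int fps fps" where "fps_y = fps_X"

definition J_ES_gf :: "int fps fps" where
  "J_ES_gf = Abs_fps (\<lambda>n. Abs_fps (\<lambda>k. int (J_ES k n)))"

end

theory Submission
  imports Defs
begin

text \<open>
  A configuration is evolutionary stable iff every house has an empty neighbour and every empty
  lot has both neighbours occupied and a house at distance two.  So the empty lots are isolated,
  the runs of houses have length 1 or 2, and every empty lot is adjacent to a run of length 2.
  Reading such a word from the left, it is empty, 1, 11 or 1011, or it is 110 or 10110 followed by
  a nonempty such word.  For the generating function F (x marking houses, y marking lots) this
  gives F = 1 + xy + x^2 y^2 + x^3 y^4 + (x^2 y^3 + x^3 y^5) (F - 1).
\<close>

unbundle fps_syntax

text \<open>Integer positions, so that the lots beyond both ends exist and are empty.\<close>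

definition occupied :: "bool list \<Rightarrow> int \<Rightarrow> bool" where
  "occupied c i \<longleftrightarrow> 0 \<le> i \<and> i < int (length c) \<and> c ! nat i"

lemma occupied_Nil [simp]: "\<not> occupied [] i"
  by (simp add: occupied_def)

lemma occupied_negative [simp]: "i < 0 \<Longrightarrow> \<not> occupied c i"
  by (simp add: occupied_def)

lemma occupied_Cons: "occupied (x # c) i \<longleftrightarrow> (if i = 0 then x else occupied c (i - 1))"
  by (auto simp: occupied_def nth_Cons' nat_diff_distrib)

lemma occupied_append:
  "occupied (p @ c) i \<longleftrightarrow>
     (if i < int (length p) then occupied p i else occupied c (i - int (length p)))"
  by (auto simp: occupied_def nth_append nat_diff_distrib)

lemma occupied_nth: "k < length c \<Longrightarrow> occupied c (int k) \<longleftrightarrow> c ! k"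
  by (simp add: occupied_def)

lemma occupied_list_update_True:
  "occupied (c[k := True]) i \<longleftrightarrow> (i = int k \<and> k < length c) \<or> occupied c i"
  by (cases "nat i = k") (auto simp: occupied_def nth_list_update split: if_splits)

lemma blocked_iff_occupied:
  "blocked c k \<longleftrightarrow> occupied c (int k - 1) \<and> occupied c (int k) \<and> occupied c (int k + 1)"
  by (cases k) (auto simp: blocked_def occupied_def nat_add_distrib)

lemma permissible_iff_occupied:
  "permissible c \<longleftrightarrow>
     (\<forall>k < length c. c ! k \<longrightarrow> \<not> (occupied c (int k - 1) \<and> occupied c (int k + 1)))"
  by (auto simp: permissible_def blocked_iff_occupied occupied_nth)

definition stable_at :: "bool list \<Rightarrow> int \<Rightarrow> bool" where
  "stable_at c i \<longleftrightarrow>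
     (if occupied c i then \<not> (occupied c (i - 1) \<and> occupied c (i + 1))
      else occupied c (i - 1) \<and> occupied c (i + 1) \<and> (occupied c (i - 2) \<or> occupied c (i + 2)))"

definition locally_stable :: "bool list \<Rightarrow> bool" where
  "locally_stable c \<longleftrightarrow> (\<forall>k < length c. stable_at c (int k))"

lemma resistant_predators_iff_occupied:
  "resistant_predators c \<longleftrightarrow>
     (\<forall>k < length c. \<not> c ! k \<longrightarrow> occupied c (int k - 1) \<and> occupied c (int k + 1))"
  by (simp add: resistant_predators_def blocked_iff_occupied occupied_list_update_True)

lemma resistant_altruists_iff_occupied:
  assumes "permissible c"
  shows "resistant_altruists c \<longleftrightarrow> (\<forall>k < length c. \<not> c ! k \<longrightarrow>
     occupied c (int k - 2) \<and> occupied c (int k - 1) \<or> occupied c (int k + 1) \<and> occupied c (int k + 2))"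
proof (intro iffI allI impI)
  fix k assume "resistant_altruists c" "k < length c" "\<not> c ! k"
  then obtain l where "l < length c" "l \<noteq> k" "blocked (c[k := True]) l"
    unfolding resistant_altruists_def by blast
  moreover have "\<not> (occupied c (int l - 1) \<and> occupied c (int l) \<and> occupied c (int l + 1))"
    using assms \<open>l < length c\<close> by (simp add: permissible_iff_occupied occupied_nth)
  ultimately have "int l = int k - 1 \<or> int l = int k + 1"
    by (auto simp: blocked_iff_occupied occupied_list_update_True)
  with \<open>blocked (c[k := True]) l\<close>
  show "occupied c (int k - 2) \<and> occupied c (int k - 1) \<or>
    occupied c (int k + 1) \<and> occupied c (int k + 2)"
    by (elim disjE) (simp_all add: blocked_iff_occupied occupied_list_update_True add.commute)
next
  assume "\<forall>k < length c. \<not> c ! k \<longrightarrow>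
     occupied c (int k - 2) \<and> occupied c (int k - 1) \<or> occupied c (int k + 1) \<and> occupied c (int k + 2)"
  then show "resistant_altruists c"
    unfolding resistant_altruists_def
  proof (intro allI impI)
    fix k assume "k < length c" "\<not> c ! k"
    then consider "occupied c (int k - 2)" "occupied c (int k - 1)"
      | "occupied c (int k + 1)" "occupied c (int k + 2)"
      using \<open>\<forall>k < length c. _\<close> by blast
    then show "\<exists>l < length c. l \<noteq> k \<and> blocked (c[k := True]) l"
    proof cases
      case 1
      then have "1 \<le> k" by (simp add: occupied_def)
      with 1 \<open>k < length c\<close> show ?thesis
        by (intro exI[of _ "k - 1"]) (auto simp: blocked_iff_occupied occupied_list_update_True)
    next
      case 2
      then have "k + 1 < length c" by (simp add: occupied_def)
      with 2 show ?thesis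
        by (intro exI[of _ "k + 1"]) (simp add: blocked_iff_occupied occupied_list_update_True add.commute)
    qed
  qed
qed

lemma maximal_if_resistant_predators:
  assumes "permissible c" "resistant_predators c"
  shows "maximal c"
  using assms unfolding maximal_def resistant_predators_def permissible_def by auto

lemma evolutionary_stable_iff_locally_stable:
  "evolutionary_stable c \<longleftrightarrow> locally_stable c"
proof -
  have "evolutionary_stable c \<longleftrightarrow>
      permissible c \<and> resistant_predators c \<and> resistant_altruists c"
    using maximal_if_resistant_predators by (auto simp: evolutionary_stable_def maximal_def)
  also have "\<dots> \<longleftrightarrow> locally_stable c"
    by (auto simp: resistant_altruists_iff_occupied permissible_iff_occupied resistant_predators_iff_occupied
        locally_stable_def stable_at_def occupied_nth)
  finally show ?thesis .
qed

lemma stable_at_if_left_empty: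
  "\<not> occupied c (i - 1) \<Longrightarrow> stable_at c i \<longleftrightarrow> occupied c i"
  by (simp add: stable_at_def)

lemma stable_at_first: "stable_at c 0 \<longleftrightarrow> occupied c 0"
  by (simp add: stable_at_if_left_empty occupied_def)

lemma occupied_append_False_Cons:
  "t \<ge> -1 \<Longrightarrow> occupied (p @ False # w) (int (length p) + 1 + t) \<longleftrightarrow> occupied w t"
  by (cases "t = -1") (auto simp: occupied_append occupied_Cons occupied_def[of w "-1"])

lemma stable_at_append_False_Cons:
  "stable_at (p @ False # w) (int (length p + 1 + j)) \<longleftrightarrow> stable_at w (int j)"
proof (cases "j = 0")
  case True
  \<comment> \<open>The window reaches back into \<open>p\<close>, but behind the empty lot only the centre matters.\<close>
  have "\<not> occupied (p @ False # w) (int (length p + 1 + j) - 1)"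
    using True by (simp add: occupied_append occupied_Cons)
  with True show ?thesis
    by (simp add: stable_at_if_left_empty occupied_append occupied_Cons)
next
  case False
  have "occupied (p @ False # w) (int (length p + 1 + j) + d) \<longleftrightarrow> occupied w (int j + d)"
    if "d \<ge> -2" for d
    using False that occupied_append_False_Cons[of "int j + d" p w] by (simp add: ac_simps)
  from this[of "-2"] this[of "-1"] this[of 0] this[of 1] this[of 2] show ?thesis
    by (simp add: stable_at_def)
qed

lemma all_less_length_append_Cons:
  "(\<forall>k < length (p @ x # w). P k) \<longleftrightarrow>
     (\<forall>k \<le> length p. P k) \<and> (\<forall>j < length w. P (length p + 1 + j))"
proof -
  have "k \<le> length p \<or> (\<exists>j < length w. k = length p + 1 + j)"
    if "k < length (p @ x # w)" for k
    using that by (cases "k \<le> length p") (auto intro!: exI[of _ "k - length p - 1"])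
  then show ?thesis by auto
qed

lemma locally_stable_append_False_Cons:
  "locally_stable (p @ False # w) \<longleftrightarrow>
     (\<forall>k \<le> length p. stable_at (p @ False # w) (int k)) \<and> locally_stable w"
  by (simp only: locally_stable_def all_less_length_append_Cons stable_at_append_False_Cons)

lemma occupied_first_if_locally_stable:
  assumes "locally_stable w"
  shows "occupied w 0 \<longleftrightarrow> w \<noteq> []"
  using assms stable_at_first[of w] by (auto simp: locally_stable_def occupied_def)

lemma locally_stable_110_append:
  "locally_stable ([True, True, False] @ w) \<longleftrightarrow> w \<noteq> [] \<and> locally_stable w"
  using locally_stable_append_False_Cons[of "[True, True]" w] occupied_first_if_locally_stable[of w]
  by (auto simp: stable_at_def occupied_Cons le_Suc_eq numeral_eq_Suc)

lemma locally_stable_10110_append: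
  "locally_stable ([True, False, True, True, False] @ w) \<longleftrightarrow> w \<noteq> [] \<and> locally_stable w"
  using locally_stable_append_False_Cons[of "[True, False, True, True]" w]
    occupied_first_if_locally_stable[of w]
  by (auto simp: stable_at_def occupied_Cons le_Suc_eq numeral_eq_Suc)

lemma locally_stable_iff_decomposition:
  "locally_stable c \<longleftrightarrow> c \<in> {[], [True], [True, True], [True, False, True, True]} \<or>
     (\<exists>w. w \<noteq> [] \<and> locally_stable w \<and>
       (c = [True, True, False] @ w \<or> c = [True, False, True, True, False] @ w))"
  (is "_ \<longleftrightarrow> ?decomposed")
proof
  assume ls: "locally_stable c"
  have st: "stable_at c (int k)" if "k < length c" for k
    using ls that by (simp add: locally_stable_def)
  show ?decomposed
  proof (cases "c = []")
    case False
    then obtain c1 where c1: "c = True # c1"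
      using st[of 0] by (cases c) (auto simp: stable_at_first occupied_Cons)
    consider "c1 = []" | c2 where "c1 = True # c2" | c2 where "c1 = False # c2"
      by (metis list.exhaust)
    then show ?thesis
    proof cases
      case (2 c2)
      show ?thesis
      proof (cases c2)
        case (Cons z w)
        with c1 2 st[of 1] have "c = [True, True, False] @ w"
          by (simp add: stable_at_def occupied_Cons)
        with ls locally_stable_110_append show ?thesis by blast
      qed (simp add: c1 2)
    next
      case (3 c2)
      then have "occupied c2 0" "occupied c2 1"
        using c1 st[of 1] by (simp_all add: stable_at_def occupied_Cons)
      then obtain c3 where c3: "c = True # False # True # True # c3"
        using c1 3 by (cases c2; cases "tl c2") (simp_all add: occupied_Cons)
      show ?thesis
      proof (cases c3)
        case (Cons z w)
        with c3 st[of 3] have "c = [True, False, True, True, False] @ w"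
          by (simp add: stable_at_def occupied_Cons)
        with ls locally_stable_10110_append show ?thesis by blast
      qed (simp add: c3)
    qed (simp add: c1)
  qed simp
next
  assume ?decomposed
  moreover have "locally_stable c" if "c \<in> {[], [True], [True, True], [True, False, True, True]}"
    using that by (auto simp: locally_stable_def stable_at_def occupied_Cons less_Suc_eq)
  ultimately show "locally_stable c"
    using locally_stable_110_append locally_stable_10110_append by blast
qed

definition word_gf :: "bool list set \<Rightarrow> int fps fps" where
  "word_gf A = Abs_fps (\<lambda>n. Abs_fps (\<lambda>k.
     int (card {c \<in> A. length c = n \<and> length (filter id c) = k})))"

lemma word_gf_nth: "word_gf A $ n $ k = int (card {c \<in> A. length c = n \<and> length (filter id c) = k})"
  by (simp add: word_gf_def)

lemma finite_words_of_length: "finite {c :: bool list. c \<in> A \<and> length c = n \<and> P c}"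
proof -
  have "finite {c :: bool list. length c = n}"
    using finite_lists_length_eq[of "UNIV :: bool set" n] by simp
  then show ?thesis
    by (rule finite_subset[rotated]) auto
qed

lemma fps_x_power_fps_y_power_mult_nth:
  "(fps_x ^ a * fps_y ^ b * F) $ n $ k = (if b \<le> n \<and> a \<le> k then F $ (n - b) $ (k - a) else 0)"
  by (simp add: fps_x_def fps_y_def mult.commute[of "fps_const _"] mult.assoc
      fps_X_power_mult_nth fps_X_power_mult_right_nth)

lemma word_gf_empty [simp]: "word_gf {} = 0"
  by (simp add: word_gf_def fps_zero_def)

lemma word_gf_Un_disjoint:
  assumes "A \<inter> B = {}"
  shows "word_gf (A \<union> B) = word_gf A + word_gf B"
proof (intro fps_ext)
  fix n k
  have "{c \<in> A \<union> B. length c = n \<and> length (filter id c) = k} =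
      {c \<in> A. length c = n \<and> length (filter id c) = k} \<union>
      {c \<in> B. length c = n \<and> length (filter id c) = k}"
    by blast
  then show "word_gf (A \<union> B) $ n $ k = (word_gf A + word_gf B) $ n $ k"
    using assms by (simp add: word_gf_nth card_Un_disjoint finite_words_of_length disjoint_iff)
qed

lemma word_gf_append_image:
  "word_gf ((@) p ` A) = fps_x ^ length (filter id p) * fps_y ^ length p * word_gf A"
proof (intro fps_ext)
  fix n k
  let ?S = "\<lambda>A n k. {c \<in> A. length c = n \<and> length (filter id c) = k}"
  have "?S ((@) p ` A) n k = (if length p \<le> n \<and> length (filter id p) \<le> k
      then (@) p ` ?S A (n - length p) (k - length (filter id p)) else {})"
    by (auto simp: image_iff)
  then show "word_gf ((@) p ` A) $ n $ k =
      (fps_x ^ length (filter id p) * fps_y ^ length p * word_gf A) $ n $ k"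
    by (simp add: fps_x_power_fps_y_power_mult_nth word_gf_nth card_image inj_on_def)
qed

lemma word_gf_singleton: "word_gf {c} = fps_x ^ length (filter id c) * fps_y ^ length c"
proof -
  have "{c \<in> {[]}. length c = n \<and> length (filter id c) = k} =
      (if n = 0 \<and> k = 0 then {[]} else {})"
    for n k :: nat
    by auto
  then have "word_gf {[]} = 1"
    by (intro fps_ext) (simp add: word_gf_nth)
  then show ?thesis
    using word_gf_append_image[of c "{[]}"] by simp
qed

lemma word_gf_insert:
  "c \<notin> A \<Longrightarrow>
     word_gf (insert c A) = fps_x ^ length (filter id c) * fps_y ^ length c + word_gf A"
  using word_gf_Un_disjoint[of "{c}" A] by (simp add: word_gf_singleton)

lemma word_gf_Diff_Nil: "[] \<in> A \<Longrightarrow> word_gf (A - {[]}) = word_gf A - 1"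
  using word_gf_insert[of "[]" "A - {[]}"] by (simp add: insert_absorb)

lemma J_ES_gf_eq_word_gf: "J_ES_gf = word_gf {c. evolutionary_stable c}"
proof (intro fps_ext)
  fix n k
  have "{c. length c = n \<and> length (filter id c) = k \<and> evolutionary_stable c}
      = {c \<in> {c. evolutionary_stable c}. length c = n \<and> length (filter id c) = k}"
    by blast
  then show "J_ES_gf $ n $ k = word_gf {c. evolutionary_stable c} $ n $ k"
    by (simp add: J_ES_gf_def J_ES_def word_gf_nth)
qed

lemma locally_stable_words_decomposition:
  "{c. locally_stable c} = {[], [True], [True, True], [True, False, True, True]}
     \<union> (@) [True, True, False] ` ({c. locally_stable c} - {[]})
     \<union> (@) [True, False, True, True, False] ` ({c. locally_stable c} - {[]})"
proof (intro set_eqI)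
  fix c
  show "c \<in> {c. locally_stable c} \<longleftrightarrow> c \<in> {[], [True], [True, True], [True, False, True, True]}
     \<union> (@) [True, True, False] ` ({c. locally_stable c} - {[]})
     \<union> (@) [True, False, True, True, False] ` ({c. locally_stable c} - {[]})"
    using locally_stable_iff_decomposition[of c] by blast
qed

lemma word_gf_locally_stable:
  defines "F \<equiv> word_gf {c. locally_stable c}"
  shows "F = 1 + fps_x * fps_y + fps_x ^ 2 * fps_y ^ 2 + fps_x ^ 3 * fps_y ^ 4
     + fps_x ^ 2 * fps_y ^ 3 * (F - 1) + fps_x ^ 3 * fps_y ^ 5 * (F - 1)"
proof -
  let ?B = "{[], [True], [True, True], [True, False, True, True]}"
  let ?L = "{c. locally_stable c} - {[]}"
  have "?B \<inter> (@) [True, True, False] ` ?L = {}"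
    "(?B \<union> (@) [True, True, False] ` ?L) \<inter> (@) [True, False, True, True, False] ` ?L = {}"
    by auto
  then have "F = word_gf ?B + word_gf ((@) [True, True, False] ` ?L)
      + word_gf ((@) [True, False, True, True, False] ` ?L)"
    unfolding F_def
    by (subst (1) locally_stable_words_decomposition) (simp only: word_gf_Un_disjoint)
  moreover have "word_gf ?B = 1 + fps_x * fps_y + fps_x ^ 2 * fps_y ^ 2 + fps_x ^ 3 * fps_y ^ 4"
    by (simp add: word_gf_insert eval_nat_numeral ac_simps)
  moreover have "word_gf ?L = F - 1"
    unfolding F_def by (rule word_gf_Diff_Nil) (simp add: locally_stable_def)
  then have "word_gf ((@) [True, True, False] ` ?L) = fps_x ^ 2 * fps_y ^ 3 * (F - 1)"
    "word_gf ((@) [True, False, True, True, False] ` ?L) = fps_x ^ 3 * fps_y ^ 5 * (F - 1)"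
    by (simp_all only: word_gf_append_image) (simp_all add: eval_nat_numeral ac_simps)
  ultimately show ?thesis
    by (simp only: add.assoc)
qed

theorem mainTheorem6:
  shows "J_ES_gf * (1 - fps_x ^ 2 * fps_y ^ 3 - fps_x ^ 3 * fps_y ^ 5)
       = 1 + fps_x * fps_y + fps_x ^ 2 * fps_y ^ 2 - fps_x ^ 2 * fps_y ^ 3
           + fps_x ^ 3 * fps_y ^ 4 - fps_x ^ 3 * fps_y ^ 5"
proof -
  define F where "F = word_gf {c. locally_stable c}"
  have "J_ES_gf = F"
    by (simp add: F_def J_ES_gf_eq_word_gf evolutionary_stable_iff_locally_stable)
  then have "J_ES_gf * (1 - fps_x ^ 2 * fps_y ^ 3 - fps_x ^ 3 * fps_y ^ 5)
      - (1 + fps_x * fps_y + fps_x ^ 2 * fps_y ^ 2 - fps_x ^ 2 * fps_y ^ 3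
           + fps_x ^ 3 * fps_y ^ 4 - fps_x ^ 3 * fps_y ^ 5)
    = F - (1 + fps_x * fps_y + fps_x ^ 2 * fps_y ^ 2 + fps_x ^ 3 * fps_y ^ 4
     + fps_x ^ 2 * fps_y ^ 3 * (F - 1) + fps_x ^ 3 * fps_y ^ 5 * (F - 1))"
    by (simp add: algebra_simps)
  also have "\<dots> = 0"
    using word_gf_locally_stable unfolding F_def by simp
  finally show ?thesis
    by simp
qed

end
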